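(* Let $X$ and $Y$ be random variables with values in $\mathbb{N}=\{0,1,2,\dots\}$ such that $P\{X=0\}\neq 1$, $P\{Y=0\}\neq1$, and let $\hat p_X(z)=\mathbb{E}[z^X]$, $\hat p_Y(z)=\mathbb{E}[z^Y]$ for $z\in[0,1]$. Let $f_0$ be a probability density on $\mathbb{N}$ with probability generating function $\hat f_0(z)=\sum_{v\ge0}z^vf_0(v)$. Then the initial value problem $$\frac{\partial}{\partial t}\hat f_t(z)=\hat f_t(\hat p_X(z))\,\hat f_t(\hat p_Y(z))-\hat f_t(z),\qquad z\in[0,1],\ t>0,$$ with initial datum $\hat f_0$, has a unique global solution. For any $t>0$ this solution can be written as $$\hat f_t(z)=e^{-t}\sum_{n\ge0}(1-e^{-t})^n\,\hat q_n(z),$$ where $\hat q_0=\hat f_0$ and, for $n\ge1$, $$\hat q_n(z)=\frac1n\sum_{j=0}^{n-1}\hat q_j(\hat p_X(z))\,\hat q_{n-1-j}(\hat p_Y(z)).$$ Moreover, $\hat f_t$ is the probability generating function of a probability density on $\mathbb{N}$ for every $t>0$.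
   Context: This equation is the probability-generating-function form of the Boltzmann-type equation $\partial_t f_t(v)=Q^+(f_t,f_t)(v)-f_t(v)$, $v\in\mathbb{N}$, where for probability densities $f,g$ on $\mathbb{N}$, $Q^+(f,g)(v)=P\{\sum_{i=1}^{V_1}Y_i+\sum_{i=1}^{V_2}X_i=v\}$ with $V_1\sim f$, $V_2\sim g$, $X_i$ i.i.d. with the law of $X$, $Y_i$ i.i.d. with the law of $Y$, all independent. *)

theory Defs
  imports "HOL-Probability.Probability"
begin

definition pgf :: "nat pmf \<Rightarrow> real \<Rightarrow> real" where
  "pgf p z = (\<Sum>v. z ^ v * pmf p v)"

fun qhat :: "nat pmf \<Rightarrow> nat pmf \<Rightarrow> nat pmf \<Rightarrow> nat \<Rightarrow> real \<Rightarrow> real" where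
  "qhat f0 pX pY 0 z = pgf f0 z"
| "qhat f0 pX pY (Suc n) z =
     (1 / real (Suc n)) *
     (\<Sum>j<Suc n. qhat f0 pX pY j (pgf pX z) * qhat f0 pX pY (n - j) (pgf pY z))"

definition is_global_solution ::
  "nat pmf \<Rightarrow> nat pmf \<Rightarrow> nat pmf \<Rightarrow> (real \<Rightarrow> real \<Rightarrow> real) \<Rightarrow> bool" where
  "is_global_solution f0 pX pY F \<longleftrightarrow>
     (\<forall>z\<in>{0..1}. F 0 z = pgf f0 z) \<and>
     (\<forall>z\<in>{0..1}. continuous_on {0..} (\<lambda>t. F t z)) \<and>
     (\<forall>z\<in>{0..1}. \<forall>t>0.
        ((\<lambda>s. F s z) has_real_derivative
           (F t (pgf pX z) * F t (pgf pY z) - F t z)) (at t)) \<and>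
     (\<forall>T\<ge>0. \<exists>B. \<forall>t\<in>{0..T}. \<forall>z\<in>{0..1}. \<bar>F t z\<bar> \<le> B)"

end

theory Submission
  imports Defs
begin

(* Each q_n is the pgf of an explicit law Q_n on the naturals: Q_{n+1} picks J uniformly in
   {0..n} and adds a random sum of X's indexed by a Q_J-variable to an independent random sum
   of Y's indexed by a Q_{n-J}-variable. Hence the series solution is the pgf of the mixture of
   the Q_n with geometric weights e^{-t} (1 - e^{-t})^n. Writing it as e^{-t} Phi(1 - e^{-t})
   with Phi(u) = sum_n q_n u^n, the recursion for q_n says exactly that Phi' is the Cauchy
   product of Phi(pX z) and Phi(pY z), which is the equation.
   Uniqueness: for solutions bounded on [0,T] x [0,1] the right-hand side is Lipschitz in the
   sup norm over z, so the difference of two solutions vanishes on consecutive short time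
   intervals. *)

lemma summable_pmf_nat: "summable (pmf (p :: nat pmf))"
proof -
  have "(\<Sum>x. ennreal (pmf p x)) = 1"
    using nn_integral_pmf[where p=p and A=UNIV]
    by (simp add: nn_integral_count_space_nat measure_pmf.emeasure_space_1)
  then show ?thesis
    by (intro summable_suminf_not_top) auto
qed

lemma summable_pgf: "z \<in> {0..1} \<Longrightarrow> summable (\<lambda>v. z ^ v * pmf p v)"
  by (rule summable_comparison_test'[OF summable_pmf_nat[of p], where N=0])
     (auto intro!: mult_left_le_one_le power_le_one)

lemma nn_integral_pgf:
  assumes "z \<in> {0..1}"
  shows "(\<integral>\<^sup>+x. ennreal (z ^ x) \<partial>measure_pmf p) = ennreal (pgf p z)"
proof -
  have "(\<integral>\<^sup>+x. ennreal (z ^ x) \<partial>measure_pmf p) = (\<Sum>x. ennreal (z ^ x * pmf p x))"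
    using assms
    by (simp add: nn_integral_measure_pmf nn_integral_count_space_nat ennreal_mult'' mult.commute)
  also have "\<dots> = ennreal (pgf p z)"
    unfolding pgf_def using assms by (intro suminf_ennreal2 summable_pgf) auto
  finally show ?thesis .
qed

lemma pgf_nonneg: "z \<in> {0..1} \<Longrightarrow> 0 \<le> pgf p z"
  unfolding pgf_def by (intro suminf_nonneg summable_pgf) auto

lemma pgf_le_1:
  assumes "z \<in> {0..1}"
  shows "pgf p z \<le> 1"
proof -
  have "ennreal (pgf p z) = (\<integral>\<^sup>+x. ennreal (z ^ x) \<partial>measure_pmf p)"
    using nn_integral_pgf[OF assms] by simp
  also have "\<dots> \<le> (\<integral>\<^sup>+x. 1 \<partial>measure_pmf p)"
    using assms by (intro nn_integral_mono) (auto intro!: power_le_one)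
  finally show ?thesis by (simp add: ennreal_le_1)
qed

lemma pgf_in_unit_interval: "z \<in> {0..1} \<Longrightarrow> pgf p z \<in> {0..1}"
  using pgf_nonneg pgf_le_1 by simp

lemma abs_pgf_le_1: "z \<in> {0..1} \<Longrightarrow> \<bar>pgf p z\<bar> \<le> 1"
  using pgf_nonneg pgf_le_1 by (metis abs_of_nonneg)

lemma pgf_eqI:
  assumes "z \<in> {0..1}" "0 \<le> r"
    and "(\<integral>\<^sup>+x. ennreal (z ^ x) \<partial>measure_pmf p) = ennreal r"
  shows "pgf p z = r"
  using assms nn_integral_pgf[OF assms(1), of p] pgf_nonneg[OF assms(1), of p] by simp

lemma nn_integral_pgf_bind_pmf:
  assumes "z \<in> {0..1}"
  shows "(\<integral>\<^sup>+x. ennreal (z ^ x) \<partial>measure_pmf (bind_pmf M K))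
           = (\<integral>\<^sup>+j. ennreal (pgf (K j) z) \<partial>measure_pmf M)"
  by (subst nn_integral_bind_pmf) (simp add: nn_integral_pgf[OF assms])

definition add_pmf :: "nat pmf \<Rightarrow> nat pmf \<Rightarrow> nat pmf" where
  "add_pmf p q = bind_pmf p (\<lambda>a. map_pmf (\<lambda>b. a + b) q)"

fun iid_sum_pmf :: "nat pmf \<Rightarrow> nat \<Rightarrow> nat pmf" where
  "iid_sum_pmf p 0 = return_pmf 0"
| "iid_sum_pmf p (Suc v) = add_pmf (iid_sum_pmf p v) p"

definition random_sum_pmf :: "nat pmf \<Rightarrow> nat pmf \<Rightarrow> nat pmf" where
  "random_sum_pmf f p = bind_pmf f (iid_sum_pmf p)"

lemma pgf_add_pmf:
  assumes z: "z \<in> {0..1}"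
  shows "pgf (add_pmf p q) z = pgf p z * pgf q z"
proof (rule pgf_eqI[OF z])
  show "0 \<le> pgf p z * pgf q z" using pgf_nonneg[OF z] by simp
  have "(\<integral>\<^sup>+x. ennreal (z ^ x) \<partial>measure_pmf (add_pmf p q))
      = (\<integral>\<^sup>+a. (\<integral>\<^sup>+b. ennreal (z ^ a) * ennreal (z ^ b) \<partial>measure_pmf q) \<partial>measure_pmf p)"
    unfolding add_pmf_def using z by (simp add: power_add ennreal_mult)
  also have "\<dots> = ennreal (pgf p z) * ennreal (pgf q z)"
    by (simp add: nn_integral_cmult nn_integral_multc nn_integral_pgf[OF z])
  also have "\<dots> = ennreal (pgf p z * pgf q z)"
    using pgf_nonneg[OF z] by (simp add: ennreal_mult)
  finally show "(\<integral>\<^sup>+x. ennreal (z ^ x) \<partial>measure_pmf (add_pmf p q)) = ennreal (pgf p z * pgf q z)" .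
qed

lemma pgf_iid_sum_pmf: "z \<in> {0..1} \<Longrightarrow> pgf (iid_sum_pmf p v) z = pgf p z ^ v"
  by (induction v) (auto intro: pgf_eqI simp: pgf_add_pmf)

lemma pgf_random_sum_pmf:
  assumes z: "z \<in> {0..1}"
  shows "pgf (random_sum_pmf f p) z = pgf f (pgf p z)"
proof (rule pgf_eqI[OF z])
  show "0 \<le> pgf f (pgf p z)" by (intro pgf_nonneg pgf_in_unit_interval z)
  have "(\<integral>\<^sup>+x. ennreal (z ^ x) \<partial>measure_pmf (random_sum_pmf f p))
      = (\<integral>\<^sup>+v. ennreal (pgf p z ^ v) \<partial>measure_pmf f)"
    unfolding random_sum_pmf_def nn_integral_pgf_bind_pmf[OF z] by (simp add: pgf_iid_sum_pmf[OF z])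
  also have "\<dots> = ennreal (pgf f (pgf p z))"
    by (intro nn_integral_pgf pgf_in_unit_interval z)
  finally show "(\<integral>\<^sup>+x. ennreal (z ^ x) \<partial>measure_pmf (random_sum_pmf f p)) = ennreal (pgf f (pgf p z))" .
qed

lemma pgf_bind_pmf_of_set_atMost:
  assumes z: "z \<in> {0..1}"
  shows "pgf (bind_pmf (pmf_of_set {..n}) K) z = (\<Sum>j\<le>n. pgf (K j) z) / real (Suc n)"
proof (rule pgf_eqI[OF z])
  show "0 \<le> (\<Sum>j\<le>n. pgf (K j) z) / real (Suc n)"
    using pgf_nonneg[OF z] by (auto intro!: sum_nonneg divide_nonneg_nonneg)
  have "(\<integral>\<^sup>+x. ennreal (z ^ x) \<partial>measure_pmf (bind_pmf (pmf_of_set {..n}) K))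
      = (\<Sum>j\<le>n. ennreal (pgf (K j) z)) / of_nat (card {..n})"
    unfolding nn_integral_pgf_bind_pmf[OF z] by (rule nn_integral_pmf_of_set) auto
  also have "\<dots> = ennreal (\<Sum>j\<le>n. pgf (K j) z) / ennreal (real (Suc n))"
    using pgf_nonneg[OF z] by (simp only: card_atMost ennreal_of_nat_eq_real_of_nat sum_ennreal)
  also have "\<dots> = ennreal ((\<Sum>j\<le>n. pgf (K j) z) / real (Suc n))"
    using pgf_nonneg[OF z] by (intro divide_ennreal sum_nonneg) auto
  finally show "(\<integral>\<^sup>+x. ennreal (z ^ x) \<partial>measure_pmf (bind_pmf (pmf_of_set {..n}) K))
      = ennreal ((\<Sum>j\<le>n. pgf (K j) z) / real (Suc n))" .
qed

lemma pgf_bind_geometric_pmf: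
  assumes z: "z \<in> {0..1}" and p: "0 < p" "p \<le> 1"
  shows "pgf (bind_pmf (geometric_pmf p) K) z = (\<Sum>n. (1 - p) ^ n * p * pgf (K n) z)"
proof (rule pgf_eqI[OF z])
  have summable: "summable (\<lambda>n. (1 - p) ^ n * p * pgf (K n) z)"
  proof (rule summable_comparison_test'[where N=0])
    show "summable (\<lambda>n. (1 - p) ^ n * p)"
      using p by (intro summable_mult2 summable_geometric) auto
    show "norm ((1 - p) ^ n * p * pgf (K n) z) \<le> (1 - p) ^ n * p" for n
      using abs_pgf_le_1[OF z, of "K n"] p by (auto simp: abs_mult intro!: mult_left_le)
  qed
  show "0 \<le> (\<Sum>n. (1 - p) ^ n * p * pgf (K n) z)"
    using pgf_nonneg[OF z] p by (intro suminf_nonneg summable) auto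
  have "(\<integral>\<^sup>+x. ennreal (z ^ x) \<partial>measure_pmf (bind_pmf (geometric_pmf p) K))
      = (\<Sum>n. ennreal ((1 - p) ^ n) * ennreal p * ennreal (pgf (K n) z))"
    unfolding nn_integral_pgf_bind_pmf[OF z]
    using p by (simp add: nn_integral_measure_pmf nn_integral_count_space_nat ennreal_mult'')
  also have "\<dots> = (\<Sum>n. ennreal ((1 - p) ^ n * p * pgf (K n) z))"
    using p pgf_nonneg[OF z] by (simp add: ennreal_mult)
  also have "\<dots> = ennreal (\<Sum>n. (1 - p) ^ n * p * pgf (K n) z)"
    using pgf_nonneg[OF z] p by (intro suminf_ennreal2 summable) auto
  finally show "(\<integral>\<^sup>+x. ennreal (z ^ x) \<partial>measure_pmf (bind_pmf (geometric_pmf p) K))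
      = ennreal (\<Sum>n. (1 - p) ^ n * p * pgf (K n) z)" .
qed

(* On the support of pmf_of_set {..n} we have min j n = j; the min only makes termination evident. *)
fun q_pmf :: "nat pmf \<Rightarrow> nat pmf \<Rightarrow> nat pmf \<Rightarrow> nat \<Rightarrow> nat pmf" where
  "q_pmf f0 pX pY 0 = f0"
| "q_pmf f0 pX pY (Suc n) = bind_pmf (pmf_of_set {..n})
     (\<lambda>j. add_pmf (random_sum_pmf (q_pmf f0 pX pY (min j n)) pX)
                   (random_sum_pmf (q_pmf f0 pX pY (n - j)) pY))"

lemma qhat_eq_pgf_q_pmf: "z \<in> {0..1} \<Longrightarrow> qhat f0 pX pY n z = pgf (q_pmf f0 pX pY n) z"
proof (induction n arbitrary: z rule: less_induct)
  case (less n)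
  show ?case
  proof (cases n)
    case 0
    then show ?thesis by simp
  next
    case (Suc m)
    have z: "z \<in> {0..1}" and zX: "pgf pX z \<in> {0..1}" and zY: "pgf pY z \<in> {0..1}"
      using less.prems by (blast intro: pgf_in_unit_interval)+
    have "pgf (q_pmf f0 pX pY n) z =
       (\<Sum>j\<le>m. pgf (q_pmf f0 pX pY (min j m)) (pgf pX z) * pgf (q_pmf f0 pX pY (m - j)) (pgf pY z))
         / real (Suc m)"
      unfolding Suc
      by (simp only: q_pmf.simps pgf_bind_pmf_of_set_atMost[OF z] pgf_add_pmf[OF z] pgf_random_sum_pmf[OF z])
    also have "\<dots> = (\<Sum>j\<le>m. qhat f0 pX pY j (pgf pX z) * qhat f0 pX pY (m - j) (pgf pY z)) / real (Suc m)"
      using Suc zX zY by (intro arg_cong2[where f="(/)"] sum.cong refl) (simp add: less.IH)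
    also have "\<dots> = qhat f0 pX pY n z"
      unfolding Suc by (simp add: lessThan_Suc_atMost)
    finally show ?thesis by simp
  qed
qed

lemma abs_qhat_le_1: "z \<in> {0..1} \<Longrightarrow> \<bar>qhat f0 pX pY n z\<bar> \<le> 1"
  by (simp add: qhat_eq_pgf_q_pmf abs_pgf_le_1)

lemma summable_norm_power_series_bounded_coeffs:
  fixes c :: "nat \<Rightarrow> real"
  assumes c: "\<And>n. \<bar>c n\<bar> \<le> 1" and x: "\<bar>x\<bar> < 1"
  shows "summable (\<lambda>n. norm (c n * x ^ n))"
proof (rule summable_comparison_test'[where N=0])
  show "summable (\<lambda>n. \<bar>x\<bar> ^ n)" using x by (intro summable_geometric) auto
  show "norm (norm (c n * x ^ n)) \<le> \<bar>x\<bar> ^ n" for n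
    using c[of n] by (simp add: abs_mult power_abs mult_left_le_one_le)
qed

lemma power_series_has_real_derivative:
  fixes c :: "nat \<Rightarrow> real"
  assumes c: "\<And>n. \<bar>c n\<bar> \<le> 1" and u: "\<bar>u\<bar> < 1"
  shows "((\<lambda>u. \<Sum>n. c n * u ^ n) has_real_derivative (\<Sum>n. diffs c n * u ^ n)) (at u)"
proof (rule termdiffs_strong'[where K=1])
  fix x :: real assume "norm x < 1"
  then have "summable (\<lambda>n. norm (c n * x ^ n))"
    by (intro summable_norm_power_series_bounded_coeffs c) simp
  then show "summable (\<lambda>n. c n * x ^ n)" by (rule summable_norm_cancel)
qed (use u in simp)

lemma diffs_qhat:
  "diffs (\<lambda>n. qhat f0 pX pY n z) n
     = (\<Sum>j\<le>n. qhat f0 pX pY j (pgf pX z) * qhat f0 pX pY (n - j) (pgf pY z))"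
  by (simp add: diffs_def lessThan_Suc_atMost)

lemma power_series_diffs_qhat_eq_product:
  fixes u :: real
  assumes z: "z \<in> {0..1}" and u: "\<bar>u\<bar> < 1"
  shows "(\<Sum>n. diffs (\<lambda>n. qhat f0 pX pY n z) n * u ^ n)
           = (\<Sum>n. qhat f0 pX pY n (pgf pX z) * u ^ n) * (\<Sum>n. qhat f0 pX pY n (pgf pY z) * u ^ n)"
proof -
  let ?a = "\<lambda>n. qhat f0 pX pY n (pgf pX z) * u ^ n"
  let ?b = "\<lambda>n. qhat f0 pX pY n (pgf pY z) * u ^ n"
  have "(\<Sum>n. ?a n) * (\<Sum>n. ?b n) = (\<Sum>k. \<Sum>i\<le>k. ?a i * ?b (k - i))"
    using z u
    by (intro Cauchy_product summable_norm_power_series_bounded_coeffs abs_qhat_le_1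
        pgf_in_unit_interval)
  also have "\<dots> = (\<Sum>k. diffs (\<lambda>n. qhat f0 pX pY n z) k * u ^ k)"
  proof (rule suminf_cong)
    fix k
    have "(\<Sum>i\<le>k. ?a i * ?b (k - i))
        = (\<Sum>i\<le>k. qhat f0 pX pY i (pgf pX z) * qhat f0 pX pY (k - i) (pgf pY z) * u ^ k)"
    proof (rule sum.cong[OF refl])
      fix i assume "i \<in> {..k}"
      then have "u ^ i * u ^ (k - i) = u ^ k" by (simp flip: power_add)
      then show "?a i * ?b (k - i) = qhat f0 pX pY i (pgf pX z) * qhat f0 pX pY (k - i) (pgf pY z) * u ^ k"
        by (metis mult.assoc mult.left_commute)
    qed
    then show "(\<Sum>i\<le>k. ?a i * ?b (k - i)) = diffs (\<lambda>n. qhat f0 pX pY n z) k * u ^ k"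
      by (simp add: diffs_qhat sum_distrib_right)
  qed
  finally show ?thesis by simp
qed

definition series_solution :: "nat pmf \<Rightarrow> nat pmf \<Rightarrow> nat pmf \<Rightarrow> real \<Rightarrow> real \<Rightarrow> real" where
  "series_solution f0 pX pY t z = exp (- t) * (\<Sum>n. (1 - exp (- t)) ^ n * qhat f0 pX pY n z)"

lemma series_solution_has_real_derivative:
  assumes z: "z \<in> {0..1}" and t: "0 \<le> t"
  shows "((\<lambda>s. series_solution f0 pX pY s z) has_real_derivative
           series_solution f0 pX pY t (pgf pX z) * series_solution f0 pX pY t (pgf pY z)
             - series_solution f0 pX pY t z) (at t)"
proof -
  define \<Phi> where "\<Phi> w u = (\<Sum>n. qhat f0 pX pY n w * u ^ n)" for w u :: real
  have sol: "series_solution f0 pX pY s w = exp (- s) * \<Phi> w (1 - exp (- s))" for s w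
    unfolding series_solution_def \<Phi>_def by (simp add: mult.commute)
  have u: "\<bar>1 - exp (- t)\<bar> < 1" using t by auto
  have "(\<Phi> z has_real_derivative \<Phi> (pgf pX z) (1 - exp (- t)) * \<Phi> (pgf pY z) (1 - exp (- t)))
          (at (1 - exp (- t)))"
    using power_series_has_real_derivative[where c="\<lambda>n. qhat f0 pX pY n z", OF abs_qhat_le_1[OF z] u]
    unfolding \<Phi>_def power_series_diffs_qhat_eq_product[OF z u] by (simp add: \<Phi>_def)
  then have "((\<lambda>s. exp (- s) * \<Phi> z (1 - exp (- s))) has_real_derivative
      - exp (- t) * \<Phi> z (1 - exp (- t))
        + exp (- t) * (\<Phi> (pgf pX z) (1 - exp (- t)) * \<Phi> (pgf pY z) (1 - exp (- t)) * exp (- t))) (at t)"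
    by (auto intro!: derivative_eq_intros DERIV_chain2[where g="\<lambda>s. 1 - exp (- s)"])
  then show ?thesis
    unfolding sol by (simp add: algebra_simps)
qed

lemma series_solution_eq_pgf:
  assumes z: "z \<in> {0..1}" and t: "0 \<le> t"
  shows "series_solution f0 pX pY t z = pgf (bind_pmf (geometric_pmf (exp (- t))) (q_pmf f0 pX pY)) z"
proof -
  have p: "0 < exp (- t)" "exp (- t) \<le> 1" using t by auto
  have "pgf (bind_pmf (geometric_pmf (exp (- t))) (q_pmf f0 pX pY)) z
     = (\<Sum>n. exp (- t) * ((1 - exp (- t)) ^ n * qhat f0 pX pY n z))"
    by (simp add: pgf_bind_geometric_pmf[OF z p] qhat_eq_pgf_q_pmf[OF z] mult_ac)
  also have "\<dots> = series_solution f0 pX pY t z"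
  proof -
    have "summable (\<lambda>n. norm (qhat f0 pX pY n z * (1 - exp (- t)) ^ n))"
      using p by (intro summable_norm_power_series_bounded_coeffs abs_qhat_le_1 z) auto
    then have "summable (\<lambda>n. (1 - exp (- t)) ^ n * qhat f0 pX pY n z)"
      by (simp add: summable_norm_cancel mult.commute)
    then show ?thesis
      unfolding series_solution_def by (rule suminf_mult)
  qed
  finally show ?thesis by simp
qed

lemma is_global_solution_series_solution:
  "is_global_solution f0 pX pY (series_solution f0 pX pY)"
  unfolding is_global_solution_def
proof (intro conjI ballI allI impI)
  fix z :: real assume z: "z \<in> {0..1}"
  show "series_solution f0 pX pY 0 z = pgf f0 z"
    by (simp add: series_solution_eq_pgf[OF z] bind_return_pmf)
  show "continuous_on {0..} (\<lambda>t. series_solution f0 pX pY t z)"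
    using series_solution_has_real_derivative[OF z, THEN DERIV_isCont]
    by (intro continuous_at_imp_continuous_on) auto
  show "((\<lambda>s. series_solution f0 pX pY s z) has_real_derivative
          series_solution f0 pX pY t (pgf pX z) * series_solution f0 pX pY t (pgf pY z)
            - series_solution f0 pX pY t z) (at t)" if "0 < t" for t
    using series_solution_has_real_derivative[OF z] that by simp
next
  show "\<exists>B. \<forall>t\<in>{0..T}. \<forall>z\<in>{0..1}. \<bar>series_solution f0 pX pY t z\<bar> \<le> B" for T :: real
  proof (intro exI ballI)
    fix t z :: real assume "t \<in> {0..T}" "z \<in> {0..1}"
    then show "\<bar>series_solution f0 pX pY t z\<bar> \<le> 1"
      by (simp add: series_solution_eq_pgf abs_pgf_le_1)
  qed
qed

lemma abs_diff_quadratic_le: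
  fixes ga gb gw fa fb fw B M :: real
  assumes "\<bar>ga\<bar> \<le> B" "\<bar>fb\<bar> \<le> B"
    and "\<bar>ga - fa\<bar> \<le> M" "\<bar>gb - fb\<bar> \<le> M" "\<bar>gw - fw\<bar> \<le> M"
  shows "\<bar>(ga * gb - gw) - (fa * fb - fw)\<bar> \<le> (2 * B + 1) * M"
proof -
  have "\<bar>ga * (gb - fb)\<bar> \<le> B * M" "\<bar>(ga - fa) * fb\<bar> \<le> M * B"
    unfolding abs_mult using assms by (auto intro!: mult_mono)
  moreover have "(ga * gb - gw) - (fa * fb - fw) = ga * (gb - fb) + (ga - fa) * fb - (gw - fw)"
    by (simp add: algebra_simps)
  ultimately show ?thesis
    using assms(5) by (simp add: algebra_simps)
qed

lemma derivative_dominated_vanishes_on_short_interval: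
  fixes D D' :: "real \<Rightarrow> 'a \<Rightarrow> real"
  assumes short: "(t1 - t0) * L < 1" and L: "0 \<le> L"
    and zero: "\<And>w. w \<in> W \<Longrightarrow> D t0 w = 0"
    and bounded: "\<And>s w. s \<in> {t0..t1} \<Longrightarrow> w \<in> W \<Longrightarrow> \<bar>D s w\<bar> \<le> K"
    and cont: "\<And>w. w \<in> W \<Longrightarrow> continuous_on {t0..t1} (\<lambda>s. D s w)"
    and deriv: "\<And>s w. s \<in> {t0<..<t1} \<Longrightarrow> w \<in> W \<Longrightarrow>
                  ((\<lambda>s. D s w) has_real_derivative D' s w) (at s)"
    and dominated: "\<And>s w M. s \<in> {t0<..<t1} \<Longrightarrow> w \<in> W \<Longrightarrow>
                      (\<And>w'. w' \<in> W \<Longrightarrow> \<bar>D s w'\<bar> \<le> M) \<Longrightarrow> \<bar>D' s w\<bar> \<le> L * M"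
    and s: "s \<in> {t0..t1}" and w: "w \<in> W"
  shows "D s w = 0"
proof -
  define S where "S = {\<bar>D s w\<bar> | s w. s \<in> {t0..t1} \<and> w \<in> W} \<union> {0}"
  have "bdd_above S"
    unfolding S_def using bounded by (intro bdd_aboveI[of _ "max K 0"]) force
  then have le_Sup: "\<bar>D s w\<bar> \<le> Sup S" "0 \<le> Sup S" if "s \<in> {t0..t1}" "w \<in> W" for s w
    using that by (auto intro!: cSup_upper simp: S_def)
  have contract: "\<bar>D s w\<bar> \<le> (t1 - t0) * L * Sup S" if s: "s \<in> {t0..t1}" and w: "w \<in> W" for s w
  proof (cases "s = t0")
    case True
    then show ?thesis using zero[OF w] le_Sup[OF s w] s L by simp
  next
    case False
    then have "t0 < s" using s by simp
    moreover have "continuous_on {t0..s} (\<lambda>r. D r w)"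
      by (rule continuous_on_subset[OF cont[OF w]]) (use s in auto)
    moreover have "((\<lambda>r. D r w) has_derivative (*) (D' r w)) (at r)" if "t0 < r" "r < s" for r
      using deriv[of r w] that s w by (simp add: has_field_derivative_def)
    ultimately obtain \<xi> where \<xi>: "t0 < \<xi>" "\<xi> < s" "D s w - D t0 w = D' \<xi> w * (s - t0)"
      by (rule mvt)
    have "\<bar>D' \<xi> w\<bar> \<le> L * Sup S"
      using \<xi> s w le_Sup by (intro dominated) auto
    then have "\<bar>D s w\<bar> \<le> L * Sup S * (s - t0)"
      using \<xi> zero[OF w] by (simp add: abs_mult mult_right_mono)
    also have "\<dots> \<le> L * Sup S * (t1 - t0)"
      using s L le_Sup[OF s w] by (intro mult_left_mono) auto
    also have "\<dots> = (t1 - t0) * L * Sup S"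
      by (simp add: mult_ac)
    finally show ?thesis .
  qed
  have "0 \<le> (t1 - t0) * L * Sup S"
    using s L le_Sup[OF s w] by simp
  then have "Sup S \<le> (t1 - t0) * L * Sup S"
    using contract unfolding S_def by (intro cSup_least) blast+
  moreover have "(t1 - t0) * L * Sup S < Sup S" if "0 < Sup S"
    using mult_strict_right_mono[OF short that] by simp
  ultimately have "Sup S \<le> 0"
    by fastforce
  with le_Sup[OF s w] show ?thesis by simp
qed

lemma derivative_dominated_vanishes:
  fixes D D' :: "real \<Rightarrow> 'a \<Rightarrow> real"
  assumes L: "0 \<le> L"
    and zero: "\<And>w. w \<in> W \<Longrightarrow> D 0 w = 0"
    and bounded: "\<And>s w. s \<in> {0..T} \<Longrightarrow> w \<in> W \<Longrightarrow> \<bar>D s w\<bar> \<le> K"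
    and cont: "\<And>w. w \<in> W \<Longrightarrow> continuous_on {0..T} (\<lambda>s. D s w)"
    and deriv: "\<And>s w. s \<in> {0<..<T} \<Longrightarrow> w \<in> W \<Longrightarrow>
                  ((\<lambda>s. D s w) has_real_derivative D' s w) (at s)"
    and dominated: "\<And>s w M. s \<in> {0<..<T} \<Longrightarrow> w \<in> W \<Longrightarrow>
                      (\<And>w'. w' \<in> W \<Longrightarrow> \<bar>D s w'\<bar> \<le> M) \<Longrightarrow> \<bar>D' s w\<bar> \<le> L * M"
    and s: "s \<in> {0..T}" and w: "w \<in> W"
  shows "D s w = 0"
proof -
  define h where "h = 1 / (L + 1)"
  have h: "0 < h" "h * L < 1"
    using L by (auto simp: h_def field_simps)
  have vanish: "\<forall>s\<in>{0..T}. s \<le> real k * h \<longrightarrow> (\<forall>w\<in>W. D s w = 0)" for k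
  proof (induction k)
    case 0
    then show ?case using zero by auto
  next
    case (Suc k)
    show ?case
    proof (intro ballI impI)
      fix s w assume s: "s \<in> {0..T}" "s \<le> real (Suc k) * h" and w: "w \<in> W"
      show "D s w = 0"
      proof (cases "s \<le> real k * h")
        case True
        then show ?thesis using Suc.IH s w by blast
      next
        case False
        let ?t0 = "real k * h" and ?t1 = "min T (real (Suc k) * h)"
        have t0: "?t0 \<in> {0..T}" using False s h by auto
        have sub: "{?t0..?t1} \<subseteq> {0..T}" "{?t0<..<?t1} \<subseteq> {0<..<T}" using t0 by auto
        have "(?t1 - ?t0) * L \<le> h * L"
          using L by (intro mult_right_mono) (auto simp: algebra_simps)
        with h have "(?t1 - ?t0) * L < 1" by simp
        then show ?thesis
        proof (rule derivative_dominated_vanishes_on_short_interval[where D=D and D'=D' and W=W and K=K])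
          show "D ?t0 w' = 0" if "w' \<in> W" for w'
            using Suc.IH t0 that by blast
          show "continuous_on {?t0..?t1} (\<lambda>s. D s w')" if "w' \<in> W" for w'
            using cont[OF that] sub(1) by (rule continuous_on_subset)
        qed (use L bounded deriv dominated sub s False w in auto)
      qed
    qed
  qed
  obtain k :: nat where "T / h \<le> real k"
    using real_arch_simple by blast
  then have "s \<le> real k * h"
    using h s by (simp add: field_simps)
  then show ?thesis
    using vanish[of k] s w by blast
qed

lemma global_solution_unique:
  assumes F: "is_global_solution f0 pX pY F" and G: "is_global_solution f0 pX pY G"
    and t: "0 \<le> t" and z: "z \<in> {0..1}"
  shows "G t z = F t z"
proof -
  obtain B where B: "0 \<le> B"
    and FB: "\<And>s w. s \<in> {0..t} \<Longrightarrow> w \<in> {0..1} \<Longrightarrow> \<bar>F s w\<bar> \<le> B"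
    and GB: "\<And>s w. s \<in> {0..t} \<Longrightarrow> w \<in> {0..1} \<Longrightarrow> \<bar>G s w\<bar> \<le> B"
  proof -
    obtain B1 B2 where "\<forall>s\<in>{0..t}. \<forall>w\<in>{0..1}. \<bar>F s w\<bar> \<le> B1"
      and "\<forall>s\<in>{0..t}. \<forall>w\<in>{0..1}. \<bar>G s w\<bar> \<le> B2"
      using F G t unfolding is_global_solution_def by meson
    then show thesis
      by (intro that[of "max (max B1 B2) 0"]) force+
  qed
  define D where "D s w = G s w - F s w" for s w
  define D' where "D' s w = (G s (pgf pX w) * G s (pgf pY w) - G s w)
                             - (F s (pgf pX w) * F s (pgf pY w) - F s w)" for s w
  have "D t z = 0"
  proof (rule derivative_dominated_vanishes[where D=D and D'=D' and W="{0..1}" and K="2 * B"])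
    show "0 \<le> 2 * B + 1" using B by simp
    show "D 0 w = 0" if "w \<in> {0..1}" for w
      using F G that unfolding is_global_solution_def D_def by simp
    show "\<bar>D s w\<bar> \<le> 2 * B" if "s \<in> {0..t}" "w \<in> {0..1}" for s w
      using FB[OF that] GB[OF that] unfolding D_def by linarith
    show "continuous_on {0..t} (\<lambda>s. D s w)" if "w \<in> {0..1}" for w
    proof -
      have "continuous_on {0..} (\<lambda>s. G s w)" "continuous_on {0..} (\<lambda>s. F s w)"
        using F G that unfolding is_global_solution_def by auto
      then show ?thesis
        unfolding D_def by (intro continuous_on_diff) (auto elim: continuous_on_subset)
    qed
    show "((\<lambda>s. D s w) has_real_derivative D' s w) (at s)" if "s \<in> {0<..<t}" "w \<in> {0..1}" for s w
      using F G that unfolding is_global_solution_def D_def D'_def by (auto intro!: DERIV_diff)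
    show "\<bar>D' s w\<bar> \<le> (2 * B + 1) * M"
      if s: "s \<in> {0<..<t}" and w: "w \<in> {0..1}" and M: "\<And>w'. w' \<in> {0..1} \<Longrightarrow> \<bar>D s w'\<bar> \<le> M"
      for s w M
    proof -
      have "pgf pX w \<in> {0..1}" "pgf pY w \<in> {0..1}"
        using w by (blast intro: pgf_in_unit_interval)+
      then show ?thesis
        unfolding D'_def using s w
        by (intro abs_diff_quadratic_le GB FB M[unfolded D_def]) auto
    qed
  qed (use t z in auto)
  then show ?thesis
    unfolding D_def by simp
qed

theorem proposition3p1:
  fixes pX pY f0 :: "nat pmf"
  assumes "pmf pX 0 \<noteq> 1" and "pmf pY 0 \<noteq> 1"
  shows "\<exists>F. is_global_solution f0 pX pY F \<and>
           (\<forall>G. is_global_solution f0 pX pY G \<longrightarrow>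
                 (\<forall>t\<ge>0. \<forall>z\<in>{0..1}. G t z = F t z)) \<and>
           (\<forall>t>0. \<forall>z\<in>{0..1}.
              F t z = exp (- t) * (\<Sum>n. (1 - exp (- t)) ^ n * qhat f0 pX pY n z)) \<and>
           (\<forall>t>0. \<exists>p :: nat pmf. \<forall>z\<in>{0..1}. F t z = pgf p z)"
proof (intro exI[of _ "series_solution f0 pX pY"] conjI allI impI ballI)
  show "is_global_solution f0 pX pY (series_solution f0 pX pY)"
    by (rule is_global_solution_series_solution)
  then show "G t z = series_solution f0 pX pY t z"
    if "is_global_solution f0 pX pY G" "0 \<le> t" "z \<in> {0..1}" for G t z
    using that by (rule global_solution_unique)
  show "series_solution f0 pX pY t z = exp (- t) * (\<Sum>n. (1 - exp (- t)) ^ n * qhat f0 pX pY n z)"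
    for t z
    by (simp add: series_solution_def)
  show "\<exists>p. \<forall>z\<in>{0..1}. series_solution f0 pX pY t z = pgf p z" if "0 < t" for t
    using that series_solution_eq_pgf by (meson less_imp_le)
qed

end
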